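(* Let $F$ be a real multilinear polynomial on $[-1,1]^n$, let $\eta>0$, and let $x\in[-1,1]^n$. Put $I=\{i: x_i\in\{-1,1\}\}$. Suppose that: - $x$ is feasible; - $G(x)=0$; - $\frac{\partial F}{\partial x_i}(x)\ne0$ for every $i\in I$. Then $x$ is a local minimum of $F$ in $[-1,1]^n$.
   Context: $\Pi_{[-1,1]^n}$ denotes the Euclidean projection onto $[-1,1]^n$, and $G(x)=\frac1\eta\big(x-\Pi_{[-1,1]^n}(x-\eta\nabla F(x))\big)$ is the gradient mapping. Feasibility: $x$ is feasible if the polynomial obtained from $F$ by fixing $x_i$ to its value for every $i\in I$ is constant. Local minimum in a set $\Delta$: $x$ is a local minimum of $F$ in $\Delta$ if there is $\delta>0$ such that $F(x)\le F(x')$ for all $x'\in\Delta$ with $\|x-x'\|_2^2\le\delta$. *)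

theory Defs
  imports "HOL-Analysis.Analysis"
begin

definition mlpoly_eval :: "('n::finite set \<Rightarrow> real) \<Rightarrow> real^'n \<Rightarrow> real" where
  "mlpoly_eval c x = (\<Sum>S\<in>UNIV. c S * (\<Prod>i\<in>S. x $ i))"

definition mlpoly_partial :: "('n::finite set \<Rightarrow> real) \<Rightarrow> 'n \<Rightarrow> real^'n \<Rightarrow> real" where
  "mlpoly_partial c i x = (\<Sum>S\<in>{S. i \<in> S}. c S * (\<Prod>j\<in>S - {i}. x $ j))"

definition mlpoly_grad :: "('n::finite set \<Rightarrow> real) \<Rightarrow> real^'n \<Rightarrow> real^'n" where
  "mlpoly_grad c x = (\<chi> i. mlpoly_partial c i x)"

definition cube :: "(real^'n::finite) set" where
  "cube = cbox (- 1) 1"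

definition grad_map :: "('n::finite set \<Rightarrow> real) \<Rightarrow> real \<Rightarrow> real^'n \<Rightarrow> real^'n" where
  "grad_map c \<eta> x = (1 / \<eta>) *\<^sub>R (x - closest_point cube (x - \<eta> *\<^sub>R mlpoly_grad c x))"

definition tight :: "real^'n::finite \<Rightarrow> 'n set" where
  "tight x = {i. x $ i = -1 \<or> x $ i = 1}"

text \<open>Feasibility: substituting x_i for every i in I yields a constant polynomial in the
  remaining variables, i.e. every coefficient of a nonempty monomial in the free
  variables vanishes. The coefficient of monomial T (T disjoint from I) after
  substitution is sum over S with S - I = T of c S * prod over S \<inter> I of x_i.\<close>
definition feasible :: "('n::finite set \<Rightarrow> real) \<Rightarrow> real^'n \<Rightarrow> bool" where
  "feasible c x \<longleftrightarrow>
     (\<forall>T. T \<noteq> {} \<and> T \<inter> tight x = {} \<longrightarrow>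
        (\<Sum>S\<in>{S. S - tight x = T}. c S * (\<Prod>i\<in>S \<inter> tight x. x $ i)) = 0)"

definition local_min_in :: "('a::real_normed_vector \<Rightarrow> real) \<Rightarrow> 'a set \<Rightarrow> 'a \<Rightarrow> bool" where
  "local_min_in F \<Delta> x \<longleftrightarrow>
     (\<exists>\<delta>>0. \<forall>x'\<in>\<Delta>. (norm (x - x'))\<^sup>2 \<le> \<delta> \<longrightarrow> F x \<le> F x')"

end

theory Submission
  imports Defs
begin

text \<open>Feasibility makes \<open>F\<close> constant on the face of the cube through \<open>x\<close> obtained by fixing
  the tight coordinates. \<open>G(x) = 0\<close> says that \<open>x\<close> is the projection of \<open>x - \<eta>\<nabla>F(x)\<close>, hence
  \<open>\<langle>\<nabla>F(x), y - x\<rangle> \<ge> 0\<close> on the cube, and testing with points that differ from \<open>x\<close> in one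
  coordinate gives \<open>\<partial>\<^sub>iF(x) (y\<^sub>i - x\<^sub>i) \<ge> 0\<close>. Given \<open>y\<close> in the cube near \<open>x\<close>, start from \<open>y\<close>
  with its tight coordinates reset to those of \<open>x\<close>, which lies on the face, and restore the
  tight coordinates of \<open>y\<close> one at a time. As \<open>F\<close> is affine in each variable, a step changes
  \<open>F\<close> by \<open>(y\<^sub>i - x\<^sub>i) \<partial>\<^sub>iF(z)\<close> at an intermediate point \<open>z\<close>; near \<open>x\<close> the nonvanishing
  \<open>\<partial>\<^sub>iF\<close> keeps the sign it has at \<open>x\<close>, so \<open>F\<close> never decreases along the way.\<close>

lemma mlpoly_eval_fix_coords:
  fixes c :: "'n::finite set \<Rightarrow> real" and x z :: "real^'n"
  assumes "\<forall>i\<in>I. z$i = x$i"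
  shows "mlpoly_eval c z = (\<Sum>T\<in>UNIV. (\<Prod>j\<in>T. z$j) *
            (\<Sum>S\<in>{S. S - I = T}. c S * (\<Prod>i\<in>S \<inter> I. x$i)))"
proof -
  have "mlpoly_eval c z = (\<Sum>S\<in>UNIV. c S * (\<Prod>i\<in>S \<inter> I. x$i) * (\<Prod>j\<in>S - I. z$j))"
    unfolding mlpoly_eval_def
  proof (rule sum.cong[OF refl])
    fix S :: "'n set"
    have "(\<Prod>i\<in>S. z$i) = (\<Prod>i\<in>S \<inter> I. z$i) * (\<Prod>i\<in>S - I. z$i)"
      by (rule prod.Int_Diff) simp
    also have "(\<Prod>i\<in>S \<inter> I. z$i) = (\<Prod>i\<in>S \<inter> I. x$i)"
      using assms by (intro prod.cong) auto
    finally show "c S * (\<Prod>i\<in>S. z$i) = c S * (\<Prod>i\<in>S \<inter> I. x$i) * (\<Prod>j\<in>S - I. z$j)"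
      by simp
  qed
  also have "\<dots> = (\<Sum>T\<in>UNIV. \<Sum>S\<in>{S\<in>UNIV. S - I = T}.
                    c S * (\<Prod>i\<in>S \<inter> I. x$i) * (\<Prod>j\<in>S - I. z$j))"
    by (rule sum.group[symmetric]) auto
  also have "\<dots> = (\<Sum>T\<in>UNIV. (\<Prod>j\<in>T. z$j) *
            (\<Sum>S\<in>{S. S - I = T}. c S * (\<Prod>i\<in>S \<inter> I. x$i)))"
    by (intro sum.cong refl) (simp add: sum_distrib_left mult.commute)
  finally show ?thesis .
qed

lemma feasible_imp_mlpoly_eval_eq:
  fixes c :: "'n::finite set \<Rightarrow> real" and x z :: "real^'n"
  assumes "feasible c x" and "\<forall>i\<in>tight x. z$i = x$i"
  shows "mlpoly_eval c z = mlpoly_eval c x"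
proof -
  let ?I = "tight x"
  let ?coeff = "\<lambda>T. \<Sum>S\<in>{S. S - ?I = T}. c S * (\<Prod>i\<in>S \<inter> ?I. x$i)"
  have coeff_0: "?coeff T = 0" if "T \<noteq> {}" for T
  proof (cases "T \<inter> ?I = {}")
    case True
    then show ?thesis using assms(1) \<open>T \<noteq> {}\<close> unfolding feasible_def by blast
  next
    case False
    then have "{S. S - ?I = T} = {}" by auto
    then show ?thesis by simp
  qed
  have eval_eq_const: "mlpoly_eval c w = ?coeff {}" if "\<forall>i\<in>?I. w$i = x$i" for w :: "real^'n"
  proof -
    have "mlpoly_eval c w = (\<Sum>T\<in>UNIV. (\<Prod>j\<in>T. w$j) * ?coeff T)"
      by (rule mlpoly_eval_fix_coords[OF that])
    also have "\<dots> = (\<Prod>j\<in>{}. w$j) * ?coeff {} + (\<Sum>T\<in>UNIV - {{}}. (\<Prod>j\<in>T. w$j) * ?coeff T)"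
      by (rule sum.remove) auto
    also have "(\<Sum>T\<in>UNIV - {{}}. (\<Prod>j\<in>T. w$j) * ?coeff T) = 0"
      using coeff_0 by (intro sum.neutral) auto
    finally show ?thesis by simp
  qed
  show ?thesis using eval_eq_const[OF assms(2)] eval_eq_const[of x] by simp
qed

lemma mlpoly_eval_split_coord:
  fixes c :: "'n::finite set \<Rightarrow> real" and w :: "real^'n"
  shows "mlpoly_eval c w = (\<Sum>S\<in>{S. i \<notin> S}. c S * (\<Prod>j\<in>S. w$j)) + w$i * mlpoly_partial c i w"
proof -
  have "mlpoly_eval c w = (\<Sum>S\<in>{S. i \<notin> S}. c S * (\<Prod>j\<in>S. w$j)) +
                          (\<Sum>S\<in>{S. i \<in> S}. c S * (\<Prod>j\<in>S. w$j))"
    unfolding mlpoly_eval_def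
    by (subst sum.union_disjoint[symmetric]) (auto intro: sum.cong)
  also have "(\<Sum>S\<in>{S. i \<in> S}. c S * (\<Prod>j\<in>S. w$j)) = w$i * mlpoly_partial c i w"
    unfolding mlpoly_partial_def sum_distrib_left
    by (intro sum.cong refl) (simp add: prod.remove)
  finally show ?thesis .
qed

lemma mlpoly_eval_diff_coord:
  fixes c :: "'n::finite set \<Rightarrow> real" and u w :: "real^'n"
  assumes "\<forall>j. j \<noteq> i \<longrightarrow> u$j = w$j"
  shows "mlpoly_eval c u - mlpoly_eval c w = (u$i - w$i) * mlpoly_partial c i w"
proof -
  have "(\<Sum>S\<in>{S. i \<notin> S}. c S * (\<Prod>j\<in>S. u$j)) = (\<Sum>S\<in>{S. i \<notin> S}. c S * (\<Prod>j\<in>S. w$j))"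
    using assms by (intro sum.cong refl arg_cong2[where f="(*)"] prod.cong) auto
  moreover have "mlpoly_partial c i u = mlpoly_partial c i w"
    unfolding mlpoly_partial_def
    using assms by (intro sum.cong refl arg_cong2[where f="(*)"] prod.cong) auto
  ultimately show ?thesis
    using mlpoly_eval_split_coord[of c u i] mlpoly_eval_split_coord[of c w i]
    by (simp add: algebra_simps)
qed

lemma isCont_mlpoly_partial: "isCont (mlpoly_partial c i) x"
  unfolding mlpoly_partial_def by (intro continuous_intros)

lemma feasible_imp_mlpoly_eval_le:
  fixes c :: "'n::finite set \<Rightarrow> real" and x y :: "real^'n"
  assumes "feasible c x"
    and "\<And>z i. i \<in> tight x \<Longrightarrow> \<forall>j. z$j = x$j \<or> z$j = y$j \<Longrightarrow>
           0 \<le> (y$i - x$i) * mlpoly_partial c i z"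
  shows "mlpoly_eval c x \<le> mlpoly_eval c y"
proof -
  define mix where "mix L = (\<chi> j. if j \<in> tight x - L then x$j else y$j)" for L
  have "mlpoly_eval c x \<le> mlpoly_eval c (mix L)" if "L \<subseteq> tight x" for L
    using finite[of L] that
  proof (induction L rule: finite_induct)
    case empty
    have "mlpoly_eval c (mix {}) = mlpoly_eval c x"
      by (rule feasible_imp_mlpoly_eval_eq[OF assms(1)]) (simp add: mix_def)
    then show ?case by simp
  next
    case (insert i L)
    then have "mlpoly_eval c (mix (insert i L)) - mlpoly_eval c (mix L) =
               (y$i - x$i) * mlpoly_partial c i (mix L)"
      using mlpoly_eval_diff_coord[of i "mix (insert i L)" "mix L" c] by (auto simp: mix_def)
    moreover have "0 \<le> (y$i - x$i) * mlpoly_partial c i (mix L)"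
      using insert.prems by (intro assms(2)) (auto simp: mix_def)
    ultimately show ?case using insert by auto
  qed
  moreover have "mix (tight x) = y" by (simp add: mix_def vec_eq_iff)
  ultimately show ?thesis by (metis order_refl)
qed

lemma closest_point_fixed_imp_inner_nonneg:
  fixes S :: "'a::euclidean_space set"
  assumes "convex S" "closed S" "\<eta> > 0" "closest_point S (x - \<eta> *\<^sub>R v) = x" "y \<in> S"
  shows "0 \<le> inner v (y - x)"
proof -
  have "inner ((x - \<eta> *\<^sub>R v) - x) (y - x) \<le> 0"
    using closest_point_dot[OF assms(1,2,5), of "x - \<eta> *\<^sub>R v"] assms(4) by simp
  then have "0 \<le> \<eta> * inner v (y - x)" by (simp add: inner_diff_left)
  then show ?thesis using assms(3) by (simp add: zero_le_mult_iff)
qed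

lemma inner_nonneg_on_cbox_imp_component_nonneg:
  fixes g x y :: "real^'n"
  assumes "x \<in> cbox a b" "\<forall>z\<in>cbox a b. 0 \<le> inner g (z - x)" "y \<in> cbox a b"
  shows "0 \<le> g$i * (y$i - x$i)"
proof -
  let ?z = "\<chi> j. if j = i then y$i else x$j"
  have "?z \<in> cbox a b" using assms(1,3) unfolding mem_box_cart by auto
  then have "0 \<le> inner g (?z - x)" using assms(2) by blast
  moreover have "?z - x = axis i (y$i - x$i)" by (simp add: vec_eq_iff axis_def)
  ultimately show ?thesis by (simp add: inner_axis)
qed

lemma grad_map_eq_0_imp_partial_nonneg:
  fixes c :: "'n::finite set \<Rightarrow> real" and x y :: "real^'n"
  assumes "\<eta> > 0" "x \<in> cube" "grad_map c \<eta> x = 0" "y \<in> cube"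
  shows "0 \<le> mlpoly_partial c i x * (y$i - x$i)"
proof -
  have "closest_point cube (x - \<eta> *\<^sub>R mlpoly_grad c x) = x"
    using assms(1,3) unfolding grad_map_def by simp
  moreover have "convex (cube :: (real^'n) set)" "closed (cube :: (real^'n) set)"
    unfolding cube_def by auto
  ultimately have "\<forall>z\<in>cube. 0 \<le> inner (mlpoly_grad c x) (z - x)"
    using assms(1) closest_point_fixed_imp_inner_nonneg by blast
  then show ?thesis
    using inner_nonneg_on_cbox_imp_component_nonneg[of x "-1" 1 "mlpoly_grad c x" y i] assms(2,4)
    by (simp add: cube_def mlpoly_grad_def)
qed

lemma eventually_same_sign_nhds:
  fixes f :: "'a::t2_space \<Rightarrow> real"
  assumes "isCont f x" "f x \<noteq> 0"
  shows "\<forall>\<^sub>F z in nhds x. 0 < f z * f x"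
proof -
  have "((\<lambda>z. f z * f x) \<longlongrightarrow> f x * f x) (nhds x)"
    using assms(1) by (intro tendsto_intros) (simp add: isCont_def tendsto_at_iff_tendsto_nhds)
  then show ?thesis by (rule order_tendstoD) (use assms(2) in \<open>auto simp: zero_less_mult_iff\<close>)
qed

lemma dist_le_if_components_from:
  fixes x y z :: "real^'n"
  assumes "\<forall>j. z$j = x$j \<or> z$j = y$j"
  shows "dist z x \<le> dist y x"
  unfolding dist_norm
proof (rule norm_le_componentwise_cart)
  show "norm ((z - x)$j) \<le> norm ((y - x)$j)" for j
    using assms[rule_format, of j] by auto
qed

lemma local_min_inI_eventually:
  assumes "\<forall>\<^sub>F y in nhds x. y \<in> \<Delta> \<longrightarrow> F x \<le> F y"
  shows "local_min_in F \<Delta> x"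
proof -
  obtain d where "d > 0" and d: "\<And>y. dist y x \<le> d \<Longrightarrow> y \<in> \<Delta> \<Longrightarrow> F x \<le> F y"
    using assms unfolding eventually_nhds_metric_le by blast
  show ?thesis
    unfolding local_min_in_def
  proof (intro exI[of _ "d\<^sup>2"] conjI ballI impI)
    show "d\<^sup>2 > 0" using \<open>d > 0\<close> by simp
    fix y assume "y \<in> \<Delta>" "(norm (x - y))\<^sup>2 \<le> d\<^sup>2"
    then have "dist x y \<le> d"
      using power2_le_imp_le[of "norm (x - y)" d] \<open>d > 0\<close> by (simp add: dist_norm)
    then show "F x \<le> F y" using d \<open>y \<in> \<Delta>\<close> by (simp add: dist_commute)
  qed
qed

theorem proposition5:
  fixes c :: "'n::finite set \<Rightarrow> real" and \<eta> :: real and x :: "real^'n"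
  assumes "\<eta> > 0"
    and "x \<in> cube"
    and "feasible c x"
    and "grad_map c \<eta> x = 0"
    and "\<forall>i\<in>tight x. mlpoly_partial c i x \<noteq> 0"
  shows "local_min_in (mlpoly_eval c) cube x"
proof (rule local_min_inI_eventually)
  have "\<forall>i\<in>tight x. \<forall>\<^sub>F z in nhds x. 0 < mlpoly_partial c i z * mlpoly_partial c i x"
    using assms(5) isCont_mlpoly_partial eventually_same_sign_nhds by blast
  then have "\<forall>\<^sub>F z in nhds x. \<forall>i\<in>tight x. 0 < mlpoly_partial c i z * mlpoly_partial c i x"
    by (rule eventually_ball_finite[OF finite])
  then obtain d where "d > 0" and d: "\<And>z i. dist z x \<le> d \<Longrightarrow> i \<in> tight x \<Longrightarrow>
                            0 < mlpoly_partial c i z * mlpoly_partial c i x"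
    unfolding eventually_nhds_metric_le by blast
  have "mlpoly_eval c x \<le> mlpoly_eval c y" if "dist y x \<le> d" "y \<in> cube" for y
  proof (rule feasible_imp_mlpoly_eval_le[OF assms(3)])
    fix z i assume "i \<in> tight x" "\<forall>j. z$j = x$j \<or> z$j = y$j"
    then have "dist z x \<le> d"
      using order_trans[OF dist_le_if_components_from that(1)] by blast
    then have "0 < mlpoly_partial c i z * mlpoly_partial c i x"
      using d \<open>i \<in> tight x\<close> by blast
    moreover have "0 \<le> mlpoly_partial c i x * (y$i - x$i)"
      using grad_map_eq_0_imp_partial_nonneg[OF assms(1,2,4) \<open>y \<in> cube\<close>] .
    ultimately show "0 \<le> (y$i - x$i) * mlpoly_partial c i z"
      by (auto simp: zero_less_mult_iff zero_le_mult_iff)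
  qed
  then show "\<forall>\<^sub>F y in nhds x. y \<in> cube \<longrightarrow> mlpoly_eval c x \<le> mlpoly_eval c y"
    unfolding eventually_nhds_metric_le using \<open>d > 0\<close> by blast
qed

end
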